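(* For every positive integer $n$ there exist a present-bias parameter $b>1$ and an instance with $O(n)$ vertices such that the set of rewards $R$ placed at $t$ for which the sophisticated agent (with abandonment) reaches $t$ from the start node consists of exponentially many (in $n$) pairwise disjoint intervals.
   Context: An instance is a finite directed acyclic graph $G=(V,E)$ with nonnegative edge costs $c(u,v)$, a start node and a target node $t$, where $t$ is the unique node with no outgoing edges. Sophisticated agent with bias $b$ and reward $R$ at $t$, which may abandon: process nodes in reverse topological order; $t$ is never abandoned and $C_R(t)=0$. For $u\neq t$, among out-edges $(u,v)$ with $v$ not abandoned let $P(u,v)=b\,c(u,v)+C_R(v)$; if none exists or all have $P(u,v)>R$, $u$ is abandoned; otherwise the agent at $u$ moves to $v^*(u)\in\arg\min P(u,v)$ and $C_R(u)=c(u,v^*(u))+C_R(v^*(u))$. The agent reaches $t$ iff the start node is not abandoned. *)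

theory Defs
  imports "HOL-Analysis.Analysis"
begin

definition is_instance ::
  "nat set \<Rightarrow> (nat \<times> nat) set \<Rightarrow> (nat \<Rightarrow> nat \<Rightarrow> real) \<Rightarrow> nat \<Rightarrow> nat \<Rightarrow> bool" where
  "is_instance V E c s t \<longleftrightarrow>
     finite V \<and> E \<subseteq> V \<times> V \<and> acyclic E \<and>
     (\<forall>u v. (u, v) \<in> E \<longrightarrow> 0 \<le> c u v) \<and>
     s \<in> V \<and> t \<in> V \<and>
     (\<forall>u\<in>V. (\<forall>v. (u, v) \<notin> E) \<longleftrightarrow> u = t)"

text \<open>Local consistency of the backward-induction process of the sophisticated
  agent with bias b and reward R: ab u means u is abandoned, C u is C_R(u).
  Ties in the argmin are broken towards the least vertex index.\<close>
definition soph_consistent ::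
  "nat set \<Rightarrow> (nat \<times> nat) set \<Rightarrow> (nat \<Rightarrow> nat \<Rightarrow> real) \<Rightarrow> nat \<Rightarrow> real \<Rightarrow> real
     \<Rightarrow> (nat \<Rightarrow> bool) \<Rightarrow> (nat \<Rightarrow> real) \<Rightarrow> bool" where
  "soph_consistent V E c t b R ab C \<longleftrightarrow>
     \<not> ab t \<and> C t = 0 \<and>
     (\<forall>u\<in>V - {t}.
        let A = {v. (u, v) \<in> E \<and> \<not> ab v};
            P = (\<lambda>v. b * c u v + C v)
        in (ab u \<longleftrightarrow> (A = {} \<or> (\<forall>v\<in>A. P v > R))) \<and>
           (\<not> ab u \<longrightarrow>
              (let v' = (LEAST v. v \<in> A \<and> (\<forall>w\<in>A. P v \<le> P w))
               in C u = c u v' + C v')))"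

text \<open>The sophisticated agent reaches t: the start node is not abandoned
  (the consistent outcome is unique on acyclic instances).\<close>
definition soph_reaches ::
  "nat set \<Rightarrow> (nat \<times> nat) set \<Rightarrow> (nat \<Rightarrow> nat \<Rightarrow> real) \<Rightarrow> nat \<Rightarrow> nat \<Rightarrow> real \<Rightarrow> real \<Rightarrow> bool" where
  "soph_reaches V E c s t b R \<longleftrightarrow>
     (\<exists>ab C. soph_consistent V E c t b R ab C \<and> \<not> ab s)"

end

theory Submission
  imports Defs
begin

text \<open>The instance is a ladder of gadgets. In gadget k the agent at node 2k+2 either pays
  direct_cost k and goes straight to node 2k, or moves for free to node 2k+1 and pays the larger
  delayed_cost k from there. As delayed_cost k < bias * direct_cost k, the agent procrastinates
  whenever its future self at 2k+1 will carry out the delayed step, i.e. whenever the remaining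
  reward is at least bias * delayed_cost k. Backward induction thus collapses to the recursion
  cost_to_go / viable below, and the consistent outcome is unique on every instance.

  Fix the choices (direct or delayed) in the n gadgets nearest to t. The rewards realising a given
  choice pattern xs form a half-open interval, the tooth of xs, on which the cost still to be paid
  is choice_cost xs. Passing one more gadget needs R \<ge> choice_cost xs + bias * direct_cost n,
  which cuts a gap off the bottom of every tooth. Hence each of the 2^n teeth carries its own
  component of the set of rewards that reach t, while that set is a finite union of intervals.\<close>

definition live_succs :: "(nat \<times> nat) set \<Rightarrow> (nat \<Rightarrow> bool) \<Rightarrow> nat \<Rightarrow> nat set" where
  "live_succs E ab u = {v. (u, v) \<in> E \<and> \<not> ab v}"

definition soph_rule ::
  "(nat \<times> nat) set \<Rightarrow> (nat \<Rightarrow> nat \<Rightarrow> real) \<Rightarrow> real \<Rightarrow> real \<Rightarrow> (nat \<Rightarrow> bool) \<Rightarrow> (nat \<Rightarrow> real)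
     \<Rightarrow> nat \<Rightarrow> bool" where
  "soph_rule E c b R ab C u \<longleftrightarrow>
     (let A = live_succs E ab u;
          P = (\<lambda>v. b * c u v + C v)
      in (ab u \<longleftrightarrow> (A = {} \<or> (\<forall>v\<in>A. P v > R))) \<and>
         (\<not> ab u \<longrightarrow>
            (let v' = (LEAST v. v \<in> A \<and> (\<forall>w\<in>A. P v \<le> P w))
             in C u = c u v' + C v')))"

lemma soph_consistent_iff_rule:
  "soph_consistent V E c t b R ab C \<longleftrightarrow>
     \<not> ab t \<and> C t = 0 \<and> (\<forall>u\<in>V - {t}. soph_rule E c b R ab C u)"
  unfolding soph_consistent_def soph_rule_def live_succs_def ..

lemma Least_minimizer_in:
  fixes P :: "'a::wellorder \<Rightarrow> 'b::linorder"
  assumes "finite A" "A \<noteq> {}"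
  shows "(LEAST v. v \<in> A \<and> (\<forall>w\<in>A. P v \<le> P w)) \<in> A"
proof -
  have "\<exists>v. v \<in> A \<and> (\<forall>w\<in>A. P v \<le> P w)"
    using ex_is_arg_min_if_finite[OF assms, of P] by (auto simp: is_arg_min_linorder)
  then show ?thesis
    by (rule LeastI2_ex) blast
qed

lemma soph_rule_no_live_succs:
  assumes "live_succs E ab u = {}"
  shows "soph_rule E c b R ab C u \<longleftrightarrow> ab u"
  using assms by (auto simp: soph_rule_def)

lemma soph_rule_strict_best:
  assumes v: "v \<in> live_succs E ab u"
    and best: "\<And>w. w \<in> live_succs E ab u \<Longrightarrow> w \<noteq> v \<Longrightarrow> b * c u v + C v < b * c u w + C w"
  shows "soph_rule E c b R ab C u \<longleftrightarrow>
           (ab u \<longleftrightarrow> R < b * c u v + C v) \<and> (\<not> ab u \<longrightarrow> C u = c u v + C v)"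
proof -
  define A where "A = live_succs E ab u"
  define P where "P w = b * c u w + C w" for w
  have min: "P v \<le> P w" if "w \<in> A" for w
    using best[of w] that unfolding A_def P_def by (cases "w = v") auto
  have "(LEAST w. w \<in> A \<and> (\<forall>w'\<in>A. P w \<le> P w')) = v"
  proof (rule Least_equality)
    show "v \<in> A \<and> (\<forall>w\<in>A. P v \<le> P w)"
      using v min unfolding A_def by blast
    fix y assume "y \<in> A \<and> (\<forall>w\<in>A. P y \<le> P w)"
    then have "y = v"
      using v best[of y] unfolding A_def P_def by force
    then show "v \<le> y" by simp
  qed
  moreover have "(A = {} \<or> (\<forall>w\<in>A. P w > R)) \<longleftrightarrow> R < P v"
    using v min unfolding A_def by force
  ultimately show ?thesis
    unfolding soph_rule_def Let_def A_def[symmetric] P_def[symmetric] by simp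
qed

lemma soph_rule_deterministic:
  assumes rule1: "soph_rule E c b R ab1 C1 u" and rule2: "soph_rule E c b R ab2 C2 u"
    and fin: "finite {v. (u, v) \<in> E}"
    and succ: "\<And>v. (u, v) \<in> E \<Longrightarrow> ab1 v = ab2 v \<and> (\<not> ab1 v \<longrightarrow> C1 v = C2 v)"
  shows "ab1 u = ab2 u \<and> (\<not> ab1 u \<longrightarrow> C1 u = C2 u)"
proof -
  define A where "A = live_succs E ab1 u"
  have A2: "live_succs E ab2 u = A"
    unfolding A_def live_succs_def using succ by blast
  have P: "b * c u v + C1 v = b * c u v + C2 v" if "v \<in> A" for v
    using that succ unfolding A_def live_succs_def by auto
  define v' where "v' = (LEAST v. v \<in> A \<and> (\<forall>w\<in>A. b * c u v + C1 v \<le> b * c u w + C1 w))"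
  have v'2: "(LEAST v. v \<in> A \<and> (\<forall>w\<in>A. b * c u v + C2 v \<le> b * c u w + C2 w)) = v'"
    unfolding v'_def by (rule arg_cong[where f = Least]) (use P in auto)
  have h1: "(ab1 u \<longleftrightarrow> (A = {} \<or> (\<forall>v\<in>A. b * c u v + C1 v > R))) \<and> (\<not> ab1 u \<longrightarrow> C1 u = c u v' + C1 v')"
    using rule1 unfolding soph_rule_def Let_def A_def v'_def .
  have h2: "(ab2 u \<longleftrightarrow> (A = {} \<or> (\<forall>v\<in>A. b * c u v + C2 v > R))) \<and> (\<not> ab2 u \<longrightarrow> C2 u = c u v' + C2 v')"
    using rule2 unfolding soph_rule_def Let_def A2 v'2 .
  have ab: "ab1 u = ab2 u"
    using h1 h2 P by auto
  moreover have "C1 u = C2 u" if "\<not> ab1 u"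
  proof -
    have "finite A"
      using fin unfolding A_def live_succs_def by (rule finite_subset[rotated]) blast
    moreover have "A \<noteq> {}"
      using h1 that by blast
    ultimately have "v' \<in> A"
      unfolding v'_def by (rule Least_minimizer_in)
    then show ?thesis
      using h1 h2 ab that P by auto
  qed
  ultimately show ?thesis by blast
qed

lemma soph_consistent_unique:
  assumes inst: "is_instance V E c s t"
    and cons1: "soph_consistent V E c t b R ab1 C1" and cons2: "soph_consistent V E c t b R ab2 C2"
    and "u \<in> V"
  shows "ab1 u = ab2 u \<and> (\<not> ab1 u \<longrightarrow> C1 u = C2 u)"
proof -
  have EV: "E \<subseteq> V \<times> V" and "finite V" "acyclic E"
    using inst by (auto simp: is_instance_def)
  then have "finite E"
    by (meson finite_SigmaI finite_subset)
  then have wf: "wf (E\<inverse>)"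
    using \<open>acyclic E\<close> by (rule finite_acyclic_wf_converse)
  show ?thesis
    using \<open>u \<in> V\<close>
  proof (induction u rule: wf_induct_rule[OF wf])
    case (1 u)
    show ?case
    proof (cases "u = t")
      case True
      then show ?thesis
        using cons1 cons2 by (simp add: soph_consistent_def)
    next
      case False
      have "{v. (u, v) \<in> E} \<subseteq> V"
        using EV by blast
      then have "finite {v. (u, v) \<in> E}"
        using \<open>finite V\<close> by (rule finite_subset)
      then show ?thesis
        using cons1 cons2 False "1.prems" EV "1.IH"
        by (intro soph_rule_deterministic[of E c b R ab1 C1 u ab2 C2])
          (auto simp: soph_consistent_iff_rule)
    qed
  qed
qed

lemma soph_reaches_iff_not_abandoned:
  assumes "is_instance V E c s t" "soph_consistent V E c t b R ab C"
  shows "soph_reaches V E c s t b R \<longleftrightarrow> \<not> ab s"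
proof
  assume "soph_reaches V E c s t b R"
  then obtain ab' C' where "soph_consistent V E c t b R ab' C'" "\<not> ab' s"
    unfolding soph_reaches_def by blast
  moreover have "s \<in> V"
    using assms(1) by (simp add: is_instance_def)
  ultimately show "\<not> ab s"
    using soph_consistent_unique[OF assms(1) _ assms(2)] by blast
next
  assume "\<not> ab s"
  then show "soph_reaches V E c s t b R"
    using assms(2) unfolding soph_reaches_def by blast
qed

lemma finite_components_Union:
  assumes "finite F" "\<And>I. I \<in> F \<Longrightarrow> connected I"
  shows "finite (components (\<Union>F))"
proof -
  have "components (\<Union>F) \<subseteq> (\<lambda>I. connected_component_set (\<Union>F) (SOME x. x \<in> I)) ` F"
  proof
    fix C assume "C \<in> components (\<Union>F)"
    then obtain x where x: "x \<in> \<Union>F" "C = connected_component_set (\<Union>F) x"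
      by (auto simp: components_iff)
    then obtain I where I: "I \<in> F" "x \<in> I"
      by blast
    then have "I \<subseteq> C"
      unfolding x(2) using assms(2) by (intro connected_component_maximal) auto
    moreover have "(SOME x. x \<in> I) \<in> I"
      using I(2) by (rule someI)
    ultimately have "C = connected_component_set (\<Union>F) (SOME x. x \<in> I)"
      using x(2) connected_component_eq by blast
    then show "C \<in> (\<lambda>I. connected_component_set (\<Union>F) (SOME x. x \<in> I)) ` F"
      using I by blast
  qed
  then show ?thesis
    using assms(1) by (simp add: finite_subset)
qed

lemma connected_component_set_gap:
  fixes S :: "real set"
  assumes "x < z" "z < y" "z \<notin> S"
  shows "y \<notin> connected_component_set S x"
proof
  assume y: "y \<in> connected_component_set S x"
  have "is_interval (connected_component_set S x)"
    by (simp add: is_interval_connected_1)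
  moreover have "x \<in> connected_component_set S x"
    using y by (auto dest: connected_component_in)
  ultimately have "z \<in> connected_component_set S x"
    using y assms(1,2) unfolding is_interval_1 by (blast intro: less_imp_le)
  then show False
    using assms(3) connected_component_subset by blast
qed

lemma card_le_card_components:
  fixes S X :: "real set"
  assumes fin: "finite (components S)" and "X \<subseteq> S"
    and gap: "\<And>x y. x \<in> X \<Longrightarrow> y \<in> X \<Longrightarrow> x < y \<Longrightarrow> \<exists>z. x < z \<and> z < y \<and> z \<notin> S"
  shows "card X \<le> card (components S)"
proof -
  have "inj_on (connected_component_set S) X"
  proof (rule inj_onI)
    have distinct: "connected_component_set S x \<noteq> connected_component_set S y"
      if xy: "x \<in> X" "y \<in> X" "x < y" for x y
    proof -
      obtain z where "x < z" "z < y" "z \<notin> S"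
        using gap[OF xy] by blast
      then have "y \<notin> connected_component_set S x"
        by (rule connected_component_set_gap)
      moreover have "y \<in> connected_component_set S y"
        using xy \<open>X \<subseteq> S\<close> by auto
      ultimately show ?thesis by blast
    qed
    fix x y assume "x \<in> X" "y \<in> X" "connected_component_set S x = connected_component_set S y"
    then show "x = y"
      using distinct[of x y] distinct[of y x] by (cases x y rule: linorder_cases) auto
  qed
  moreover have "connected_component_set S ` X \<subseteq> components S"
    using \<open>X \<subseteq> S\<close> by (auto simp: components_def)
  ultimately show ?thesis
    using fin by (rule card_inj_on_le)
qed

definition bias :: real where
  "bias = 6/5"

definition delayed_cost :: "nat \<Rightarrow> real" where
  "delayed_cost k = (1/5)^k"

definition direct_cost :: "nat \<Rightarrow> real" where
  "direct_cost k = 10/11 * (1/5)^k"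

lemma direct_le_delayed: "direct_cost k \<le> delayed_cost k"
  by (simp add: direct_cost_def delayed_cost_def)

lemma bias_direct_le_bias_delayed: "bias * direct_cost k \<le> bias * delayed_cost k"
  using direct_le_delayed by (simp add: bias_def)

lemma delayed_less_biased_direct: "delayed_cost k < bias * direct_cost k"
  by (simp add: direct_cost_def delayed_cost_def bias_def)

text \<open>On the ladder, cost_to_go k R is C_R(2k), and viable k R says that node 2k is not abandoned.\<close>

fun cost_to_go :: "nat \<Rightarrow> real \<Rightarrow> real" where
  "cost_to_go 0 R = 0"
| "cost_to_go (Suc k) R = cost_to_go k R +
     (if bias * delayed_cost k \<le> R - cost_to_go k R then delayed_cost k else direct_cost k)"

fun viable :: "nat \<Rightarrow> real \<Rightarrow> bool" where
  "viable 0 R = True"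
| "viable (Suc k) R \<longleftrightarrow> viable k R \<and> bias * direct_cost k \<le> R - cost_to_go k R"

definition ladder_V :: "nat \<Rightarrow> nat set" where
  "ladder_V m = {0..2*m}"

text \<open>Gadget k consists of the edges 2k+2 \<rightarrow> 2k (cost direct_cost k), 2k+2 \<rightarrow> 2k+1 (cost 0)
  and 2k+1 \<rightarrow> 2k (cost delayed_cost k); the target is node 0 and the start is node 2m.\<close>

definition ladder_E :: "nat \<Rightarrow> (nat \<times> nat) set" where
  "ladder_E m = {(u, v). 0 < u \<and> u \<le> 2*m \<and> (v = u - 1 \<or> (even u \<and> v = u - 2))}"

definition ladder_cost :: "nat \<Rightarrow> nat \<Rightarrow> real" where
  "ladder_cost u v =
     (if odd u then delayed_cost (u div 2) else if odd v then 0 else direct_cost (v div 2))"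

definition ladder_abandoned :: "real \<Rightarrow> nat \<Rightarrow> bool" where
  "ladder_abandoned R u \<longleftrightarrow>
     \<not> viable (u div 2) R \<or> (odd u \<and> R - cost_to_go (u div 2) R < bias * delayed_cost (u div 2))"

definition ladder_C :: "real \<Rightarrow> nat \<Rightarrow> real" where
  "ladder_C R u = cost_to_go (u div 2) R + (if odd u then delayed_cost (u div 2) else 0)"

lemma ladder_E_odd: "(Suc (2*k), v) \<in> ladder_E m \<longleftrightarrow> k < m \<and> v = 2*k"
  unfolding ladder_E_def by auto

lemma ladder_E_even: "(Suc (Suc (2*k)), v) \<in> ladder_E m \<longleftrightarrow> k < m \<and> (v = 2*k \<or> v = Suc (2*k))"
  unfolding ladder_E_def by auto

lemma ladder_E_decreasing: "(u, v) \<in> ladder_E m \<Longrightarrow> v < u \<and> u \<le> 2*m"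
  unfolding ladder_E_def by auto

lemma is_instance_ladder: "is_instance (ladder_V m) (ladder_E m) ladder_cost (2*m) 0"
  unfolding is_instance_def
proof (intro conjI)
  show "finite (ladder_V m)"
    by (simp add: ladder_V_def)
  show "ladder_E m \<subseteq> ladder_V m \<times> ladder_V m"
    using ladder_E_decreasing by (fastforce simp: ladder_V_def)
  have "v < u" if "(u, v) \<in> (ladder_E m)\<^sup>+" for u v
    using that by (induction rule: trancl_induct) (auto dest: ladder_E_decreasing)
  then show "acyclic (ladder_E m)"
    unfolding acyclic_def by blast
  show "\<forall>u v. (u, v) \<in> ladder_E m \<longrightarrow> 0 \<le> ladder_cost u v"
    by (simp add: ladder_cost_def delayed_cost_def direct_cost_def)
  show "2*m \<in> ladder_V m" "0 \<in> ladder_V m"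
    by (auto simp: ladder_V_def)
  show "\<forall>u\<in>ladder_V m. (\<forall>v. (u, v) \<notin> ladder_E m) \<longleftrightarrow> u = 0"
  proof
    fix u assume "u \<in> ladder_V m"
    show "(\<forall>v. (u, v) \<notin> ladder_E m) \<longleftrightarrow> u = 0"
    proof (cases "u = 0")
      case False
      then have "(u, u - 1) \<in> ladder_E m"
        using \<open>u \<in> ladder_V m\<close> by (simp add: ladder_V_def ladder_E_def)
      then show ?thesis
        using False by blast
    qed (auto dest: ladder_E_decreasing)
  qed
qed

lemma ladder_rule_odd:
  assumes "k < m"
  shows "soph_rule (ladder_E m) ladder_cost bias R (ladder_abandoned R) (ladder_C R) (2*k+1)"
proof (cases "viable k R")
  case True
  have "live_succs (ladder_E m) (ladder_abandoned R) (2*k+1) = {2*k}"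
    using assms True by (auto simp: live_succs_def ladder_E_odd ladder_abandoned_def)
  then show ?thesis
    using True by (subst soph_rule_strict_best[of "2*k"])
      (auto simp: ladder_abandoned_def ladder_C_def ladder_cost_def)
next
  case False
  then have "live_succs (ladder_E m) (ladder_abandoned R) (2*k+1) = {}"
    by (auto simp: live_succs_def ladder_E_odd ladder_abandoned_def)
  then show ?thesis
    using False by (simp add: soph_rule_no_live_succs ladder_abandoned_def)
qed

lemma ladder_rule_even:
  assumes "k < m"
  shows "soph_rule (ladder_E m) ladder_cost bias R (ladder_abandoned R) (ladder_C R) (2*k+2)"
proof -
  define f where "f = cost_to_go k R"
  note costs = direct_le_delayed[of k] delayed_less_biased_direct[of k]
  have "1 \<le> bias"
    by (simp add: bias_def)
  consider "\<not> viable k R" | "viable k R" "bias * delayed_cost k \<le> R - f"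
    | "viable k R" "R - f < bias * delayed_cost k"
    by fastforce
  then show ?thesis
  proof cases
    case 1
    then have "live_succs (ladder_E m) (ladder_abandoned R) (2*k+2) = {}"
      by (auto simp: live_succs_def ladder_E_even ladder_abandoned_def)
    then show ?thesis
      using 1 by (simp add: soph_rule_no_live_succs ladder_abandoned_def)
  next
    case 2
    have "live_succs (ladder_E m) (ladder_abandoned R) (2*k+2) = {2*k, 2*k+1}"
      using assms 2 by (auto simp: live_succs_def ladder_E_even ladder_abandoned_def f_def)
    moreover have "bias * direct_cost k \<le> R - f"
      using 2 bias_direct_le_bias_delayed[of k] by linarith
    ultimately show ?thesis
      using 2 costs \<open>1 \<le> bias\<close> by (subst soph_rule_strict_best[of "2*k+1"])
        (auto simp: ladder_abandoned_def ladder_C_def ladder_cost_def f_def)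
  next
    case 3
    have "live_succs (ladder_E m) (ladder_abandoned R) (2*k+2) = {2*k}"
      using assms 3 by (auto simp: live_succs_def ladder_E_even ladder_abandoned_def f_def)
    then show ?thesis
      using 3 by (subst soph_rule_strict_best[of "2*k"])
        (auto simp: ladder_abandoned_def ladder_C_def ladder_cost_def f_def)
  qed
qed

lemma ladder_consistent:
  "soph_consistent (ladder_V m) (ladder_E m) ladder_cost 0 bias R (ladder_abandoned R) (ladder_C R)"
  unfolding soph_consistent_iff_rule
proof (intro conjI ballI)
  show "\<not> ladder_abandoned R 0" "ladder_C R 0 = 0"
    by (simp_all add: ladder_abandoned_def ladder_C_def)
  fix u assume "u \<in> ladder_V m - {0}"
  then have "0 < u" "u \<le> 2*m"
    by (auto simp: ladder_V_def)
  then have "\<exists>k<m. u = 2*k+1 \<or> u = 2*k+2"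
    by presburger
  then show "soph_rule (ladder_E m) ladder_cost bias R (ladder_abandoned R) (ladder_C R) u"
    using ladder_rule_odd ladder_rule_even by blast
qed

lemma soph_reaches_ladder_iff:
  "soph_reaches (ladder_V m) (ladder_E m) ladder_cost (2*m) 0 bias R \<longleftrightarrow> viable m R"
  using soph_reaches_iff_not_abandoned[OF is_instance_ladder ladder_consistent]
  by (simp add: ladder_abandoned_def)

lemma viable_interval_decomposition:
  "\<exists>F. finite F \<and> (\<forall>(I, f)\<in>F. is_interval I \<and> (\<forall>R\<in>I. cost_to_go k R = f)) \<and>
       {R. viable k R} = (\<Union>(I, f)\<in>F. I)"
proof (induction k)
  case 0
  show ?case
    by (intro exI[of _ "{(UNIV, 0)}"]) auto
next
  case (Suc k)
  then obtain F where F: "finite F" "\<forall>(I, f)\<in>F. is_interval I \<and> (\<forall>R\<in>I. cost_to_go k R = f)"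
    and viable: "{R. viable k R} = (\<Union>(I, f)\<in>F. I)"
    by blast
  define cut where "cut = (\<lambda>(I, f).
    {(I \<inter> {bias * direct_cost k + f ..< bias * delayed_cost k + f}, f + direct_cost k),
     (I \<inter> {bias * delayed_cost k + f ..}, f + delayed_cost k)})"
  have pieces: "is_interval J \<and> (\<forall>R\<in>J. cost_to_go (Suc k) R = g)"
    if "(J, g) \<in> cut (I, f)" "(I, f) \<in> F" for J g I f
  proof -
    have "is_interval I" "\<forall>R\<in>I. cost_to_go k R = f"
      using F(2) that(2) by auto
    then show ?thesis
      using that(1) unfolding cut_def
      by (auto simp: is_interval_Int is_interval_ic is_interval_co)
  qed
  have union: "(\<Union>(J, g)\<in>cut (I, f). J) = I \<inter> {bias * direct_cost k + f ..}" for I f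
    using bias_direct_le_bias_delayed[of k] by (auto simp: cut_def)
  have "{R. viable (Suc k) R} = (\<Union>(I, f)\<in>F. I \<inter> {bias * direct_cost k + f ..})"
  proof (intro set_eqI iffI)
    fix R assume "R \<in> {R. viable (Suc k) R}"
    then have R: "viable k R" "bias * direct_cost k \<le> R - cost_to_go k R"
      by auto
    then obtain I f where "(I, f) \<in> F" "R \<in> I"
      using viable by blast
    moreover have "cost_to_go k R = f"
      using F(2) calculation by blast
    ultimately show "R \<in> (\<Union>(I, f)\<in>F. I \<inter> {bias * direct_cost k + f ..})"
      using R(2) by force
  next
    fix R assume "R \<in> (\<Union>(I, f)\<in>F. I \<inter> {bias * direct_cost k + f ..})"
    then obtain I f where If: "(I, f) \<in> F" "R \<in> I" "bias * direct_cost k + f \<le> R"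
      by auto
    then have "viable k R" "cost_to_go k R = f"
      using viable F(2) by blast+
    then show "R \<in> {R. viable (Suc k) R}"
      using If(3) by simp
  qed
  also have "\<dots> = (\<Union>(I, f)\<in>F. \<Union>(J, g)\<in>cut (I, f). J)"
    by (simp only: union)
  also have "\<dots> = (\<Union>(J, g)\<in>\<Union>(cut ` F). J)"
    by (auto simp: case_prod_unfold)
  finally have "{R. viable (Suc k) R} = (\<Union>(J, g)\<in>\<Union>(cut ` F). J)" .
  moreover have "finite (\<Union>(cut ` F))"
    using F(1) by (auto simp: cut_def)
  moreover have "\<forall>(J, g)\<in>\<Union>(cut ` F). is_interval J \<and> (\<forall>R\<in>J. cost_to_go (Suc k) R = g)"
    using pieces by fast
  ultimately show ?case
    by blast
qed

lemma finite_components_viable: "finite (components {R. viable k R})"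
proof -
  obtain F where F: "finite F" "\<forall>(I, f)\<in>F. is_interval I \<and> (\<forall>R\<in>I. cost_to_go k R = f)"
    and viable: "{R. viable k R} = (\<Union>(I, f)\<in>F. I)"
    using viable_interval_decomposition[of k] by blast
  have "{R. viable k R} = \<Union>(fst ` F)"
    using viable by (simp add: case_prod_beta)
  moreover have "connected I" if "I \<in> fst ` F" for I
    using F(2) that by (auto simp: is_interval_connected)
  ultimately show ?thesis
    using F(1) by (simp add: finite_components_Union)
qed

definition step_cost :: "bool \<Rightarrow> nat \<Rightarrow> real" where
  "step_cost delayed k = (if delayed then delayed_cost k else direct_cost k)"

text \<open>A choice pattern lists the choices from the highest gadget down to gadget 0;
  True stands for the delayed route.\<close>

fun choice_cost :: "bool list \<Rightarrow> real" where
  "choice_cost [] = 0"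
| "choice_cost (x # xs) = choice_cost xs + step_cost x (length xs)"

text \<open>The top choice x of x # xs is made iff R \<ge> choice_cost xs + bias * step_cost x (length xs),
  that is, iff R \<ge> choice_cost (x # xs) + tooth_base (x # xs).\<close>

fun tooth_base :: "bool list \<Rightarrow> real" where
  "tooth_base [] = 0"
| "tooth_base (x # xs) = (bias - 1) * step_cost x (length xs)"

definition tooth_top :: "nat \<Rightarrow> real" where
  "tooth_top k = 4/3 * (1/5)^k"

definition tooth :: "bool list \<Rightarrow> real set" where
  "tooth xs = {choice_cost xs + tooth_base xs ..< choice_cost xs + tooth_top (length xs)}"

lemma tooth_numerals:
  "delayed_cost k + tooth_top (Suc k) \<le> tooth_top k"
  "direct_cost k + tooth_top (Suc k) \<le> bias * delayed_cost k"
  "bias * direct_cost k < tooth_top k"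
  "(bias - 1) * delayed_cost k < bias * direct_cost (Suc k)"
  "0 < bias * direct_cost 0"
  by (simp_all add: delayed_cost_def direct_cost_def tooth_top_def bias_def)

lemma step_cost_bounds:
  "direct_cost k \<le> step_cost x k" "step_cost x k \<le> delayed_cost k"
  "bias * direct_cost k \<le> bias * step_cost x k"
  by (simp_all add: step_cost_def direct_le_delayed bias_def)

lemma tooth_base_less: "tooth_base xs < bias * direct_cost (length xs)"
proof (cases xs)
  case (Cons x ys)
  have "tooth_base xs \<le> (bias - 1) * delayed_cost (length ys)"
    using Cons step_cost_bounds by (simp add: bias_def)
  also have "\<dots> < bias * direct_cost (length xs)"
    using Cons tooth_numerals(4) by simp
  finally show ?thesis .
qed (simp add: tooth_numerals(5))

lemma tooth_Cons_subset: "tooth (x # xs) \<subseteq> tooth xs"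
proof
  fix R assume "R \<in> tooth (x # xs)"
  then have R: "choice_cost xs + bias * step_cost x (length xs) \<le> R"
    "R < choice_cost xs + step_cost x (length xs) + tooth_top (Suc (length xs))"
    by (auto simp: tooth_def algebra_simps)
  have "choice_cost xs + tooth_base xs \<le> R"
    using R(1) tooth_base_less[of xs] step_cost_bounds(3)[of "length xs" x] by linarith
  moreover have "R < choice_cost xs + tooth_top (length xs)"
    using R(2) step_cost_bounds[where x = x and k = "length xs"] tooth_numerals(1)[of "length xs"] by linarith
  ultimately show "R \<in> tooth xs"
    by (simp add: tooth_def)
qed

lemma viable_on_tooth:
  "R \<in> tooth xs \<Longrightarrow> viable (length xs) R \<and> cost_to_go (length xs) R = choice_cost xs"
proof (induction xs)
  case (Cons x xs)
  define k where "k = length xs"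
  have IH: "viable k R" "cost_to_go k R = choice_cost xs"
    using Cons tooth_Cons_subset unfolding k_def by blast+
  have R: "choice_cost xs + bias * step_cost x k \<le> R"
    "R < choice_cost xs + step_cost x k + tooth_top (Suc k)"
    using Cons.prems by (auto simp: tooth_def algebra_simps k_def)
  have "x \<longleftrightarrow> bias * delayed_cost k \<le> R - choice_cost xs"
    using R tooth_numerals(2)[of k] by (cases x) (auto simp: step_cost_def)
  then show ?case
    using IH R(1) step_cost_bounds(3)[of k x] by (auto simp: k_def step_cost_def)
qed simp

lemma viable_Suc_on_tooth:
  assumes "R \<in> tooth xs"
  shows "viable (Suc (length xs)) R \<longleftrightarrow> choice_cost xs + bias * direct_cost (length xs) \<le> R"
  using viable_on_tooth[OF assms] by auto

lemma tooth_disjoint: "length xs = length ys \<Longrightarrow> xs \<noteq> ys \<Longrightarrow> tooth xs \<inter> tooth ys = {}"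
proof (induction xs arbitrary: ys)
  case Nil
  then show ?case by simp
next
  case (Cons x xs)
  obtain y ys' where ys: "ys = y # ys'" "length ys' = length xs"
    using Cons.prems(1) by (cases ys) auto
  show ?case
  proof (cases "xs = ys'")
    case False
    then have "tooth xs \<inter> tooth ys' = {}"
      using Cons.IH ys(2) by simp
    then show ?thesis
      using tooth_Cons_subset[of x xs] tooth_Cons_subset[of y ys'] ys(1) by blast
  next
    case True
    define k where "k = length xs"
    define pivot where "pivot = choice_cost xs + bias * delayed_cost k"
    have "tooth (False # xs) \<subseteq> {..< pivot}"
      using tooth_numerals(2)[of k] by (auto simp: tooth_def step_cost_def k_def pivot_def)
    moreover have "tooth (True # xs) \<subseteq> {pivot ..}"
      by (auto simp: tooth_def step_cost_def k_def pivot_def algebra_simps)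
    ultimately have disj: "tooth (False # xs) \<inter> tooth (True # xs) = {}"
      by fastforce
    have "x \<noteq> y"
      using Cons.prems(2) ys(1) True by blast
    then show ?thesis
      using True ys(1) disj by (cases x; cases y) (simp_all add: Int_commute)
  qed
qed

definition tooth_peak :: "bool list \<Rightarrow> real" where
  "tooth_peak xs = choice_cost xs + bias * direct_cost (length xs)"

lemma tooth_peak_in_tooth: "tooth_peak xs \<in> tooth xs"
  using tooth_base_less[of xs] tooth_numerals(3)[of "length xs"]
  by (simp add: tooth_peak_def tooth_def)

lemma viable_Suc_tooth_peak: "viable (Suc (length xs)) (tooth_peak xs)"
  using viable_Suc_on_tooth[OF tooth_peak_in_tooth] by (simp add: tooth_peak_def)

lemma tooth_peak_in_tooth_iff:
  "length xs = length ys \<Longrightarrow> tooth_peak xs \<in> tooth ys \<longleftrightarrow> xs = ys"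
  using tooth_disjoint[of xs ys] tooth_peak_in_tooth[of xs] by blast

lemma gap_below_tooth_peak:
  assumes "length xs = length ys" "tooth_peak xs < tooth_peak ys"
  shows "\<exists>z. tooth_peak xs < z \<and> z < tooth_peak ys \<and> \<not> viable (Suc (length ys)) z"
proof -
  define z where "z = choice_cost ys + tooth_base ys"
  have "z \<in> tooth ys" "z < tooth_peak ys"
    using tooth_peak_in_tooth[of ys] tooth_base_less[of ys]
    by (auto simp: z_def tooth_def tooth_peak_def)
  moreover have "tooth_peak xs < z"
  proof (rule ccontr)
    assume "\<not> tooth_peak xs < z"
    then have "tooth_peak xs \<in> tooth ys"
      using tooth_peak_in_tooth[of ys] assms(2) by (auto simp: z_def tooth_def)
    then show False
      using tooth_peak_in_tooth_iff[OF assms(1)] assms(2) by auto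
  qed
  moreover have "\<not> viable (Suc (length ys)) z"
    using viable_Suc_on_tooth[OF \<open>z \<in> tooth ys\<close>] \<open>z < tooth_peak ys\<close>
    by (simp add: tooth_peak_def)
  ultimately show ?thesis
    by blast
qed

lemma card_components_viable: "2 ^ n \<le> card (components {R. viable (Suc n) R})"
proof -
  define L where "L = {xs :: bool list. length xs = n}"
  have "inj_on tooth_peak L"
  proof (rule inj_onI)
    fix xs ys assume "xs \<in> L" "ys \<in> L" "tooth_peak xs = tooth_peak ys"
    then show "xs = ys"
      using tooth_peak_in_tooth_iff[of xs ys] tooth_peak_in_tooth[of ys] by (simp add: L_def)
  qed
  then have "2 ^ n = card (tooth_peak ` L)"
    using card_lists_length_eq[of "UNIV :: bool set" n] by (simp add: card_image L_def)
  also have "\<dots> \<le> card (components {R. viable (Suc n) R})"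
  proof (rule card_le_card_components[OF finite_components_viable])
    show "tooth_peak ` L \<subseteq> {R. viable (Suc n) R}"
      using viable_Suc_tooth_peak by (auto simp: L_def)
    fix p q assume "p \<in> tooth_peak ` L" "q \<in> tooth_peak ` L" "p < q"
    then obtain xs ys where "xs \<in> L" "ys \<in> L" "p = tooth_peak xs" "q = tooth_peak ys"
      by blast
    then show "\<exists>z. p < z \<and> z < q \<and> z \<notin> {R. viable (Suc n) R}"
      using gap_below_tooth_peak[of xs ys] \<open>p < q\<close> by (simp add: L_def)
  qed
  finally show ?thesis .
qed

theorem mainTheorem6:
  "\<exists>K::real. \<exists>d::real. K > 0 \<and> d > 0 \<and>
     (\<forall>n::nat. n \<ge> 1 \<longrightarrow>
        (\<exists>b::real. b > 1 \<and>
         (\<exists>V E c s t. is_instance V E c s t \<and> real (card V) \<le> K * real n \<and>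
            (let S = {R::real. soph_reaches V E c s t b R}
             in finite (components S) \<and>
                real (card (components S)) \<ge> 2 powr (d * real n)))))"
proof (rule exI[of _ "5::real"], rule exI[of _ "1::real"], intro conjI allI impI)
  fix n :: nat assume "1 \<le> n"
  define m where "m = Suc n"
  have reaches: "{R. soph_reaches (ladder_V m) (ladder_E m) ladder_cost (2*m) 0 bias R} = {R. viable m R}"
    by (simp add: soph_reaches_ladder_iff)
  have size: "real (card (ladder_V m)) \<le> 5 * real n"
    using \<open>1 \<le> n\<close> by (simp add: ladder_V_def m_def)
  have "(2::real) powr (1 * real n) = real (2 ^ n)"
    by (simp add: powr_realpow)
  also have "\<dots> \<le> real (card (components {R. viable m R}))"
    using card_components_viable[of n] unfolding m_def of_nat_le_iff .
  finally have count: "2 powr (1 * real n) \<le> real (card (components {R. viable m R}))" .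
  have "1 < bias"
    by (simp add: bias_def)
  then show "\<exists>b>1. \<exists>V E c s t. is_instance V E c s t \<and> real (card V) \<le> 5 * real n \<and>
      (let S = {R. soph_reaches V E c s t b R}
       in finite (components S) \<and> 2 powr (1 * real n) \<le> real (card (components S)))"
    using is_instance_ladder[of m] size finite_components_viable[of m] count
    unfolding Let_def reaches[symmetric] by blast
qed simp_all

end
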